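(* Let $f=\frac1n\sum_{i=1}^n f_i$ where each $f_i:\mathbb{R}^d\to\mathbb{R}$ is $L$-smooth, and assume moreover that either each $f_i$ is $\mu$-strongly convex for some $\mu>0$, or $\inf_x f(x)>-\infty$. Then the iterates of No Full Grad SVRG (described in the context) satisfy, for every epoch $s$, $$\Big\|\nabla f(\omega_s)-\frac1n\sum_{t=0}^{n-1}v_s^t\Big\|^2\le 2\|\nabla f(\omega_s)-v_s\|^2+\frac{2L^2}{n}\sum_{t=0}^{n-1}\|x_s^t-\omega_s\|^2.$$
   Context: No Full Grad SVRG: input $x_0^0\in\mathbb{R}^d$, $\omega_0=x_0^0$, $\tilde v_0^0=0$, $v_0=0$, stepsize $\gamma>0$. For epochs $s=0,1,\dots$: choose a permutation $\pi_s^0,\dots,\pi_s^{n-1}$ of the $n$ component indices (by any shuffling rule); for $t=0,\dots,n-1$ set $\tilde v_s^{t+1}=\frac{t}{t+1}\tilde v_s^t+\frac1{t+1}\nabla f_{\pi_s^t}(x_s^t)$, $v_s^t=\nabla f_{\pi_s^t}(x_s^t)-\nabla f_{\pi_s^t}(\omega_s)+v_s$, $x_s^{t+1}=x_s^t-\gamma v_s^t$; then $x_{s+1}^0=x_s^n$, $\omega_{s+1}=x_s^n$, $\tilde v_{s+1}^0=0$, $v_{s+1}=\tilde v_s^n$. *)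

theory Defs
  imports "HOL-Analysis.Analysis"
begin

text \<open>Components are indexed by 0..n-1. g i x is the gradient of f i at x.\<close>

definition has_grad :: "('a::real_inner \<Rightarrow> real) \<Rightarrow> ('a \<Rightarrow> 'a) \<Rightarrow> bool" where
  "has_grad f g \<longleftrightarrow> (\<forall>x. (f has_derivative (\<lambda>h. g x \<bullet> h)) (at x))"

definition L_smooth :: "real \<Rightarrow> ('a::real_inner \<Rightarrow> real) \<Rightarrow> ('a \<Rightarrow> 'a) \<Rightarrow> bool" where
  "L_smooth L f g \<longleftrightarrow> has_grad f g \<and> (\<forall>x y. norm (g x - g y) \<le> L * norm (x - y))"

definition strongly_convex :: "real \<Rightarrow> ('a::real_inner \<Rightarrow> real) \<Rightarrow> bool" where
  "strongly_convex mu f \<longleftrightarrow> convex_on UNIV (\<lambda>x. f x - mu / 2 * (norm x)\<^sup>2)"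

text \<open>Inner loop of epoch s, started from x_s^0 = omega, with stored vector v = v_s.
  ps s t is the index pi_s^t.\<close>
fun nfg_x :: "nat \<Rightarrow> (nat \<Rightarrow> 'a::real_vector \<Rightarrow> 'a) \<Rightarrow> (nat \<Rightarrow> nat \<Rightarrow> nat) \<Rightarrow> real
              \<Rightarrow> nat \<Rightarrow> 'a \<Rightarrow> 'a \<Rightarrow> nat \<Rightarrow> 'a" where
  "nfg_x n g \<pi> \<gamma> s \<omega> v 0 = \<omega>"
| "nfg_x n g \<pi> \<gamma> s \<omega> v (Suc t) =
     (let x = nfg_x n g \<pi> \<gamma> s \<omega> v t in
        x - \<gamma> *\<^sub>R (g (\<pi> s t) x - g (\<pi> s t) \<omega> + v))"

definition nfg_v :: "nat \<Rightarrow> (nat \<Rightarrow> 'a::real_vector \<Rightarrow> 'a) \<Rightarrow> (nat \<Rightarrow> nat \<Rightarrow> nat) \<Rightarrow> real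
              \<Rightarrow> nat \<Rightarrow> 'a \<Rightarrow> 'a \<Rightarrow> nat \<Rightarrow> 'a" where
  "nfg_v n g \<pi> \<gamma> s \<omega> v t =
     g (\<pi> s t) (nfg_x n g \<pi> \<gamma> s \<omega> v t) - g (\<pi> s t) \<omega> + v"

fun nfg_vt :: "nat \<Rightarrow> (nat \<Rightarrow> 'a::real_vector \<Rightarrow> 'a) \<Rightarrow> (nat \<Rightarrow> nat \<Rightarrow> nat) \<Rightarrow> real
              \<Rightarrow> nat \<Rightarrow> 'a \<Rightarrow> 'a \<Rightarrow> nat \<Rightarrow> 'a" where
  "nfg_vt n g \<pi> \<gamma> s \<omega> v 0 = 0"
| "nfg_vt n g \<pi> \<gamma> s \<omega> v (Suc t) =
     (real t / real (t + 1)) *\<^sub>R nfg_vt n g \<pi> \<gamma> s \<omega> v t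
     + (1 / real (t + 1)) *\<^sub>R g (\<pi> s t) (nfg_x n g \<pi> \<gamma> s \<omega> v t)"

fun nfg_epoch :: "nat \<Rightarrow> (nat \<Rightarrow> 'a::real_vector \<Rightarrow> 'a) \<Rightarrow> (nat \<Rightarrow> nat \<Rightarrow> nat) \<Rightarrow> real
              \<Rightarrow> 'a \<Rightarrow> nat \<Rightarrow> 'a \<times> 'a" where
  "nfg_epoch n g \<pi> \<gamma> x0 0 = (x0, 0)"
| "nfg_epoch n g \<pi> \<gamma> x0 (Suc s) =
     (let (\<omega>, v) = nfg_epoch n g \<pi> \<gamma> x0 s in
       (nfg_x n g \<pi> \<gamma> s \<omega> v n, nfg_vt n g \<pi> \<gamma> s \<omega> v n))"

definition nfg_omega where "nfg_omega n g \<pi> \<gamma> x0 s = fst (nfg_epoch n g \<pi> \<gamma> x0 s)"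
definition nfg_vs where "nfg_vs n g \<pi> \<gamma> x0 s = snd (nfg_epoch n g \<pi> \<gamma> x0 s)"

definition nfg_iter_x where
  "nfg_iter_x n g \<pi> \<gamma> x0 s t =
     nfg_x n g \<pi> \<gamma> s (nfg_omega n g \<pi> \<gamma> x0 s) (nfg_vs n g \<pi> \<gamma> x0 s) t"
definition nfg_iter_v where
  "nfg_iter_v n g \<pi> \<gamma> x0 s t =
     nfg_v n g \<pi> \<gamma> s (nfg_omega n g \<pi> \<gamma> x0 s) (nfg_vs n g \<pi> \<gamma> x0 s) t"

end

theory Submission
  imports Defs
begin

text \<open>Within an epoch, \<open>v\<^sub>s\<^sup>t - v\<^sub>s = \<nabla>f\<^sub>i(x\<^sub>s\<^sup>t) - \<nabla>f\<^sub>i(\<omega>\<^sub>s)\<close> with \<open>i = \<pi>\<^sub>s\<^sup>t\<close>, so the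
  average of the \<open>v\<^sub>s\<^sup>t\<close> is \<open>v\<^sub>s\<close> plus the average of these gradient differences.
  Splitting with \<open>\<parallel>a - b\<parallel>\<^sup>2 \<le> 2\<parallel>a\<parallel>\<^sup>2 + 2\<parallel>b\<parallel>\<^sup>2\<close>, bounding the squared norm of an average
  by the average of squared norms, and using that each gradient is \<open>L\<close>-Lipschitz gives
  the claim.\<close>

lemma norm_diff_power2_le:
  fixes a b :: "'a::real_normed_vector"
  shows "(norm (a - b))\<^sup>2 \<le> 2 * (norm a)\<^sup>2 + 2 * (norm b)\<^sup>2"
proof -
  have "(norm (a - b))\<^sup>2 \<le> (norm a + norm b)\<^sup>2"
    by (intro power_mono norm_triangle_ineq4) auto
  also have "\<dots> \<le> 2 * (norm a)\<^sup>2 + 2 * (norm b)\<^sup>2"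
    using sum_squares_ge_zero[of "norm a - norm b" 0]
    by (simp add: power2_eq_square algebra_simps)
  finally show ?thesis .
qed

lemma norm_mean_power2_le:
  fixes d :: "'b \<Rightarrow> 'a::real_normed_vector"
  shows "(norm ((1 / real (card A)) *\<^sub>R (\<Sum>t\<in>A. d t)))\<^sup>2
           \<le> (1 / real (card A)) * (\<Sum>t\<in>A. (norm (d t))\<^sup>2)"
proof -
  have "norm ((1 / real (card A)) *\<^sub>R (\<Sum>t\<in>A. d t))
          \<le> (1 / real (card A)) * (\<Sum>t\<in>A. norm (d t))"
    by (simp add: mult_left_mono norm_sum divide_right_mono)
  then have "(norm ((1 / real (card A)) *\<^sub>R (\<Sum>t\<in>A. d t)))\<^sup>2
               \<le> (1 / real (card A))\<^sup>2 * (\<Sum>t\<in>A. norm (d t))\<^sup>2"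
    by (metis norm_ge_zero power_mono power_mult_distrib)
  also have "\<dots> \<le> (1 / real (card A))\<^sup>2 * ((\<Sum>t\<in>A. (norm (d t))\<^sup>2) * card A)"
    by (intro mult_left_mono sum_squared_le_sum_of_squares) auto
  also have "\<dots> = (1 / real (card A)) * (\<Sum>t\<in>A. (norm (d t))\<^sup>2)"
    by (cases "card A = 0") (simp_all add: power2_eq_square)
  finally show ?thesis .
qed

lemma L_smooth_grad_diff_power2_le:
  assumes "L_smooth L f g"
  shows "(norm (g x - g y))\<^sup>2 \<le> L\<^sup>2 * (norm (x - y))\<^sup>2"
proof -
  have "norm (g x - g y) \<le> L * norm (x - y)"
    using assms unfolding L_smooth_def by blast
  then have "(norm (g x - g y))\<^sup>2 \<le> (L * norm (x - y))\<^sup>2"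
    by (intro power_mono) auto
  then show ?thesis
    by (simp add: power_mult_distrib)
qed

lemma nfg_v_mean:
  assumes "n \<ge> 1"
  shows "(1 / real n) *\<^sub>R (\<Sum>t<n. nfg_v n g \<pi> \<gamma> s \<omega> v t)
           = v + (1 / real n) *\<^sub>R
                   (\<Sum>t<n. g (\<pi> s t) (nfg_x n g \<pi> \<gamma> s \<omega> v t) - g (\<pi> s t) \<omega>)"
  using assms
  by (simp add: nfg_v_def sum.distrib scaleR_add_right sum_constant_scaleR del: sum_constant)

lemma nfg_v_mean_error_le:
  fixes G :: "'a::real_inner"
  assumes n: "n \<ge> 1"
    and smooth: "\<And>i. i < n \<Longrightarrow> L_smooth L (f i) (g i)"
    and \<pi>: "\<And>t. t < n \<Longrightarrow> \<pi> s t < n"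
  shows "(norm (G - (1 / real n) *\<^sub>R (\<Sum>t<n. nfg_v n g \<pi> \<gamma> s \<omega> v t)))\<^sup>2
         \<le> 2 * (norm (G - v))\<^sup>2
           + 2 * L\<^sup>2 / real n * (\<Sum>t<n. (norm (nfg_x n g \<pi> \<gamma> s \<omega> v t - \<omega>))\<^sup>2)"
proof -
  define x where "x = nfg_x n g \<pi> \<gamma> s \<omega> v"
  define d where "d t = g (\<pi> s t) (x t) - g (\<pi> s t) \<omega>" for t
  have "(norm (G - (1 / real n) *\<^sub>R (\<Sum>t<n. nfg_v n g \<pi> \<gamma> s \<omega> v t)))\<^sup>2
          = (norm ((G - v) - (1 / real n) *\<^sub>R (\<Sum>t<n. d t)))\<^sup>2"
    unfolding nfg_v_mean[OF n] x_def d_def by (simp add: algebra_simps)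
  also have "\<dots> \<le> 2 * (norm (G - v))\<^sup>2 + 2 * (norm ((1 / real n) *\<^sub>R (\<Sum>t<n. d t)))\<^sup>2"
    by (rule norm_diff_power2_le)
  also have "(norm ((1 / real n) *\<^sub>R (\<Sum>t<n. d t)))\<^sup>2 \<le> (1 / real n) * (\<Sum>t<n. (norm (d t))\<^sup>2)"
    using norm_mean_power2_le[of "{..<n}" d] by simp
  also have "\<dots> \<le> (1 / real n) * (\<Sum>t<n. L\<^sup>2 * (norm (x t - \<omega>))\<^sup>2)"
    unfolding d_def
    by (intro mult_left_mono sum_mono L_smooth_grad_diff_power2_le[OF smooth[OF \<pi>]]) auto
  also have "\<dots> = L\<^sup>2 / real n * (\<Sum>t<n. (norm (x t - \<omega>))\<^sup>2)"
    by (simp add: sum_distrib_left)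
  finally show ?thesis
    by (simp add: x_def)
qed

theorem lemma1:
  fixes n :: nat and L \<gamma> :: real
    and f :: "nat \<Rightarrow> real ^ 'd \<Rightarrow> real" and g :: "nat \<Rightarrow> real ^ 'd \<Rightarrow> real ^ 'd"
    and F :: "real ^ 'd \<Rightarrow> real" and gradF :: "real ^ 'd \<Rightarrow> real ^ 'd"
    and \<pi> :: "nat \<Rightarrow> nat \<Rightarrow> nat" and x0 :: "real ^ 'd" and s :: nat
  assumes n: "n \<ge> 1"
    and gamma: "\<gamma> > 0"
    and smooth: "\<And>i. i < n \<Longrightarrow> L_smooth L (f i) (g i)"
    and F_def: "F = (\<lambda>x. (1 / real n) * (\<Sum>i<n. f i x))"
    and gradF: "has_grad F gradF"
    and extra: "(\<exists>\<mu>>0. \<forall>i<n. strongly_convex \<mu> (f i)) \<or> bdd_below (range F)"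
    and perm: "\<And>s. bij_betw (\<pi> s) {..<n} {..<n}"
  shows "(norm (gradF (nfg_omega n g \<pi> \<gamma> x0 s)
            - (1 / real n) *\<^sub>R (\<Sum>t<n. nfg_iter_v n g \<pi> \<gamma> x0 s t)))\<^sup>2
         \<le> 2 * (norm (gradF (nfg_omega n g \<pi> \<gamma> x0 s) - nfg_vs n g \<pi> \<gamma> x0 s))\<^sup>2
           + 2 * L\<^sup>2 / real n *
             (\<Sum>t<n. (norm (nfg_iter_x n g \<pi> \<gamma> x0 s t - nfg_omega n g \<pi> \<gamma> x0 s))\<^sup>2)"
  unfolding nfg_iter_v_def nfg_iter_x_def
proof (rule nfg_v_mean_error_le[OF n smooth])
  show "\<pi> s t < n" if "t < n" for t
    using perm[of s] that by (auto dest: bij_betw_apply)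
qed

end
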